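(* Let $S$ be a string of length $n$ over a totally ordered alphabet, let $i\in[1,n]$ and $j=\mathrm{nss}[i]\ne n+1$. If $\mathrm{llce}(i,j)> j-i$, then $\mathrm{llce}(i-(j-i),i)=\mathrm{llce}(i,j)-(j-i)$ and $\mathrm{nss}[i-(j-i)]=i$.
   Context: For $i\in[1,n+1]$, $S_i=S[i..n]$ ($S_{n+1}$ empty); $\prec$ is the induced lexicographical order. $\mathrm{nss}[i]=\min\{j \mid j=n+1 \text{ or } (j\in(i,n] \text{ and } S_i\succ S_j)\}$ for $i\in[1,n]$. $\mathrm{llce}(a,b)$ is the length of the longest common suffix of the prefixes $S[1..a]$ and $S[1..b]$. *)

theory Defs
  imports Main
begin

text \<open>Strings are lists; positions are 1-based. suf S i = S[i..n] (empty for i = n+1).\<close>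
definition suf :: "'a list \<Rightarrow> nat \<Rightarrow> 'a list" where
  "suf S i = drop (i - 1) S"

definition nss :: "'a::linorder list \<Rightarrow> nat \<Rightarrow> nat" where
  "nss S i = (LEAST j. j = length S + 1 \<or>
      (i < j \<and> j \<le> length S \<and> ord_class.lexordp (suf S j) (suf S i)))"

definition llce :: "'a list \<Rightarrow> nat \<Rightarrow> nat \<Rightarrow> nat" where
  "llce S a b = (GREATEST l. l \<le> a \<and> l \<le> b \<and>
      drop (a - l) (take a S) = drop (b - l) (take b S))"

end

theory Submission
  imports Defs "HOL-Library.Sublist"
begin

text \<open>
  Put d = j - i and u = S[i..j). Since llce(i, j) counts the letter at position i
  itself, llce(i, j) > d means that u also occupies S[i-d..i), and peeling it off gives
  llce(i, j) = d + llce(i-d, i). With X = S_j this means S_i = u X, S_(i-d) = u u X and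
  X < u X, while minimality of nss[i] says that no w X with w a proper nonempty suffix
  of u is smaller than u X. This lifts to v u X >= u u X for the same v, which covers
  every S_k with i - d < k < i; since S_i = u X < u u X, nss[i-d] = i.
\<close>

text \<open>Positions are 1-based: S ! (a - Suc t) is the letter t places before position a,
  so this says S[a-l+1..a] = S[b-l+1..b].\<close>
definition common_suffix_len :: "'a list \<Rightarrow> nat \<Rightarrow> nat \<Rightarrow> nat \<Rightarrow> bool" where
  "common_suffix_len S a b l \<longleftrightarrow> l \<le> a \<and> l \<le> b \<and> (\<forall>t<l. S ! (a - Suc t) = S ! (b - Suc t))"

lemma llce_eq_Greatest_common_suffix_len:
  assumes "a \<le> length S" "b \<le> length S"
  shows "llce S a b = (GREATEST l. common_suffix_len S a b l)"
proof -
  have "drop (a - l) (take a S) = drop (b - l) (take b S) \<longleftrightarrow>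
      (\<forall>t<l. S ! (a - Suc t) = S ! (b - Suc t))" if "l \<le> a" "l \<le> b" for l
  proof -
    have "drop (a - l) (take a S) = drop (b - l) (take b S) \<longleftrightarrow>
        take l (rev (take a S)) = take l (rev (take b S))"
      using assms that by (simp add: take_rev min_absorb1)
    also have "\<dots> \<longleftrightarrow> (\<forall>t<l. S ! (a - Suc t) = S ! (b - Suc t))"
      using assms that by (auto simp: list_eq_iff_nth_eq rev_nth)
    finally show ?thesis .
  qed
  then show ?thesis
    unfolding llce_def common_suffix_len_def by (intro arg_cong[where f = Greatest] ext) blast
qed

lemma common_suffix_len_llce:
  assumes "a \<le> length S" "b \<le> length S"
  shows "common_suffix_len S a b (llce S a b)"
  unfolding llce_eq_Greatest_common_suffix_len[OF assms]
  by (rule GreatestI_nat[where k = 0 and b = a]) (auto simp: common_suffix_len_def)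

lemma le_llce:
  assumes "a \<le> length S" "b \<le> length S" "common_suffix_len S a b l"
  shows "l \<le> llce S a b"
  unfolding llce_eq_Greatest_common_suffix_len[OF assms(1,2)]
  by (rule Greatest_le_nat[where b = a]) (use assms(3) in \<open>auto simp: common_suffix_len_def\<close>)

lemma common_suffix_len_add_period:
  assumes "a \<le> b"
  shows "common_suffix_len S a b ((b - a) + l) \<longleftrightarrow>
    common_suffix_len S a b (b - a) \<and> common_suffix_len S (a - (b - a)) a l"
proof -
  have split: "(\<forall>t < d + l. P t) \<longleftrightarrow> (\<forall>t<d. P t) \<and> (\<forall>s<l. P (d + s))" for P and d :: nat
    by (auto, metis add_diff_inverse_nat add_less_cancel_left)
  have "S ! (a - Suc (b - a + s)) = S ! (a - (b - a) - Suc s)"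
    "S ! (b - Suc (b - a + s)) = S ! (a - Suc s)" for s
    using assms by (simp_all add: algebra_simps)
  then show ?thesis
    unfolding common_suffix_len_def
    using assms by (auto simp only: split)
qed

lemma llce_eq_period_add_llce:
  assumes "a \<le> b" "b \<le> length S" "b - a \<le> llce S a b"
  shows "llce S a b = (b - a) + llce S (a - (b - a)) a"
proof (rule antisym)
  have a_le: "a \<le> length S" "a - (b - a) \<le> length S"
    using assms by auto
  have cs_ab: "common_suffix_len S a b ((b - a) + (llce S a b - (b - a)))"
    using common_suffix_len_llce[OF a_le(1) assms(2)] assms(3) by simp
  then have "common_suffix_len S (a - (b - a)) a (llce S a b - (b - a))"
    using common_suffix_len_add_period[OF assms(1)] by blast
  then have "llce S a b - (b - a) \<le> llce S (a - (b - a)) a"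
    by (rule le_llce[OF a_le(2,1)])
  then show "llce S a b \<le> (b - a) + llce S (a - (b - a)) a"
    by simp
  have "common_suffix_len S a b (b - a)"
    using cs_ab common_suffix_len_add_period[OF assms(1)] by blast
  then have "common_suffix_len S a b ((b - a) + llce S (a - (b - a)) a)"
    using common_suffix_len_add_period[OF assms(1)] common_suffix_len_llce[OF a_le(2,1)] by blast
  then show "(b - a) + llce S (a - (b - a)) a \<le> llce S a b"
    by (rule le_llce[OF a_le(1) assms(2)])
qed

lemma take_suf_eq_if_le_llce:
  assumes "a \<le> length S" "b \<le> length S" "l \<le> llce S a b"
  shows "take l (suf S (Suc (a - l))) = take l (suf S (Suc (b - l)))"
proof -
  have cs: "common_suffix_len S a b (llce S a b)"
    using assms(1,2) by (rule common_suffix_len_llce)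
  then have "l \<le> a" "l \<le> b"
    using assms(3) by (auto simp: common_suffix_len_def)
  show ?thesis
  proof (rule nth_equalityI)
    show "length (take l (suf S (Suc (a - l)))) = length (take l (suf S (Suc (b - l))))"
      using assms \<open>l \<le> a\<close> \<open>l \<le> b\<close> by (simp add: suf_def)
    fix s assume "s < length (take l (suf S (Suc (a - l))))"
    then have "s < l" by simp
    have idx: "a - Suc (l - Suc s) = a - l + s" "b - Suc (l - Suc s) = b - l + s"
      using \<open>s < l\<close> \<open>l \<le> a\<close> \<open>l \<le> b\<close> by auto
    have "l - Suc s < llce S a b"
      using \<open>s < l\<close> assms(3) by simp
    then have "S ! (a - l + s) = S ! (b - l + s)"
      using cs unfolding common_suffix_len_def idx[symmetric] by blast
    then show "take l (suf S (Suc (a - l))) ! s = take l (suf S (Suc (b - l))) ! s"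
      using \<open>s < l\<close> assms(1,2) \<open>l \<le> a\<close> \<open>l \<le> b\<close> by (simp add: suf_def)
  qed
qed

lemma drop_suf: "1 \<le> k \<Longrightarrow> drop m (suf S k) = suf S (k + m)"
  by (simp add: suf_def add.commute)

lemma nss_spec:
  fixes S :: "'a::linorder list"
  assumes "nss S i \<noteq> length S + 1"
  shows "i < nss S i" "nss S i \<le> length S" "ord_class.lexordp (suf S (nss S i)) (suf S i)"
proof -
  have "nss S i = length S + 1 \<or>
      i < nss S i \<and> nss S i \<le> length S \<and> ord_class.lexordp (suf S (nss S i)) (suf S i)"
    unfolding nss_def by (rule LeastI[where k = "length S + 1"]) simp
  with assms show "i < nss S i" "nss S i \<le> length S" "ord_class.lexordp (suf S (nss S i)) (suf S i)"
    by auto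
qed

lemma not_lexordp_suf_before_nss:
  fixes S :: "'a::linorder list"
  assumes "i < k" "k < nss S i"
  shows "\<not> ord_class.lexordp (suf S k) (suf S i)"
proof
  assume "ord_class.lexordp (suf S k) (suf S i)"
  moreover have "nss S i \<le> length S + 1"
    unfolding nss_def by (rule Least_le) simp
  then have "k \<le> length S"
    using assms(2) by simp
  ultimately have "nss S i \<le> k"
    unfolding nss_def using assms(1) by (intro Least_le) blast
  with assms(2) show False by simp
qed

lemma nss_eqI:
  fixes S :: "'a::linorder list"
  assumes "i < j" "j \<le> length S" "ord_class.lexordp (suf S j) (suf S i)"
    and "\<And>k. i < k \<Longrightarrow> k < j \<Longrightarrow> \<not> ord_class.lexordp (suf S k) (suf S i)"
  shows "nss S i = j"
  unfolding nss_def
proof (rule Least_equality)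
  show "j = length S + 1 \<or> i < j \<and> j \<le> length S \<and> ord_class.lexordp (suf S j) (suf S i)"
    using assms by blast
  fix k assume "k = length S + 1 \<or> i < k \<and> k \<le> length S \<and> ord_class.lexordp (suf S k) (suf S i)"
  then show "j \<le> k"
  proof
    assume "k = length S + 1"
    with assms(2) show ?thesis by simp
  next
    assume "i < k \<and> k \<le> length S \<and> ord_class.lexordp (suf S k) (suf S i)"
    with assms(4) show ?thesis by (meson not_le)
  qed
qed

lemma append_eq_append_Cons_longer:
  assumes "v @ X = us @ b # ws" "length us < length v"
  obtains v' where "v = us @ b # v'"
  using assms by (auto simp: append_eq_append_conv_if append_eq_Cons_conv) (metis append_take_drop_id)

lemma not_lexordp_strict_suffix_doubled:
  fixes u v X :: "'a::linorder list"
  assumes X_less: "ord_class.lexordp X (u @ X)"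
    and suffixes: "\<And>w. w \<noteq> [] \<Longrightarrow> strict_suffix w u \<Longrightarrow> \<not> ord_class.lexordp (w @ X) (u @ X)"
    and v: "v \<noteq> []" "strict_suffix v u"
  shows "\<not> ord_class.lexordp (v @ u @ X) (u @ u @ X)"
proof
  assume vuX_less: "ord_class.lexordp (v @ u @ X) (u @ u @ X)"
  have len: "length v < length u"
    using v(2) by (rule suffix_length_less)
  have "\<not> ord_class.lexordp (v @ X) (u @ X)" "v @ X \<noteq> u @ X"
    using suffixes v len by auto
  then have "ord_class.lexordp (u @ X) (v @ X)"
    using lexordp_linear by blast
  then obtain us a b vs ws where ab: "a < b" and u_eq: "u @ X = us @ a # vs" and v_eq: "v @ X = us @ b # ws"
  proof -
    have "\<not> (\<exists>x vs. v @ X = (u @ X) @ x # vs)"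
      using len by (auto dest: arg_cong[where f = length])
    with \<open>ord_class.lexordp (u @ X) (v @ X)\<close> that show thesis
      by (auto simp: lexordp_iff)
  qed
  show False
  proof (cases "length us < length v")
    case True
    obtain v' where "v = us @ b # v'"
      using v_eq True by (rule append_eq_append_Cons_longer)
    moreover obtain u' where "u = us @ a # u'"
      using u_eq True len by (elim append_eq_append_Cons_longer) simp
    ultimately have "ord_class.lexordp (u @ u @ X) (v @ u @ X)"
      using ab by (simp add: lexordp_append_left_rightI)
    with vuX_less show False
      using lexordp_antisym by blast
  next
    case False
    then have "take (length v) (u @ X) = take (length v) (v @ X)"
      using u_eq v_eq by simp
    then have "take (length v) u = v"
      using len by simp
    then obtain w where u_vw: "u = v @ w"
      by (metis append_take_drop_id)
    then have w: "w \<noteq> []" "strict_suffix w u"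
      using len v(1) by (auto simp: strict_suffix_def suffix_def)
    have "ord_class.lexordp (v @ w @ X) (v @ X)"
      using \<open>ord_class.lexordp (u @ X) (v @ X)\<close> u_vw by simp
    then have "ord_class.lexordp (w @ X) X"
      by (rule lexordp_append_leftD) simp
    then have "ord_class.lexordp (w @ X) (u @ X)"
      using X_less by (rule lexordp_trans)
    with suffixes w show False by blast
  qed
qed

lemma suf_eq_take_append_suf: "1 \<le> i \<Longrightarrow> suf S i = take d (suf S i) @ suf S (i + d)"
  using drop_suf[of i d S] by (metis append_take_drop_id)

lemma not_lexordp_suffix_of_block_before_nss:
  fixes S :: "'a::linorder list"
  assumes nss: "nss S i \<noteq> length S + 1" and "1 \<le> i"
    and w: "w \<noteq> []" "strict_suffix w (take (nss S i - i) (suf S i))"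
  shows "\<not> ord_class.lexordp (w @ suf S (nss S i)) (suf S i)"
proof -
  define j where "j = nss S i"
  have j: "i < j" "j \<le> length S"
    using nss_spec[OF nss] unfolding j_def by auto
  obtain z where z: "take (j - i) (suf S i) = z @ w" "z \<noteq> []"
    using w(2) unfolding j_def by (auto simp: strict_suffix_def suffix_def)
  moreover have "length (take (j - i) (suf S i)) = j - i"
    using j by (simp add: suf_def)
  ultimately have w_len: "0 < length z" "0 < length w" "length z + length w = j - i"
    using w(1) by (metis length_append length_greater_0_conv)+
  have "w @ suf S j = drop (length z) (take (j - i) (suf S i) @ suf S j)"
    using z(1) by simp
  also have "\<dots> = drop (length z) (suf S i)"
    using suf_eq_take_append_suf[of i S "j - i"] assms(2) j by simp
  also have "\<dots> = suf S (i + length z)"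
    using assms(2) by (rule drop_suf)
  also have "i + length z = j - length w"
    using w_len j by arith
  finally have "w @ suf S j = suf S (j - length w)" .
  moreover have "i < j - length w" "j - length w < j"
    using w_len by arith+
  ultimately show ?thesis
    using not_lexordp_suf_before_nss[of i "j - length w" S] unfolding j_def by simp
qed

lemma nss_of_repeated_block:
  fixes S :: "'a::linorder list"
  assumes nss: "nss S i \<noteq> length S + 1" and d: "d = nss S i - i" "d < i"
    and block: "take d (suf S (i - d)) = take d (suf S i)"
  shows "nss S (i - d) = i"
proof -
  define u where "u = take d (suf S i)"
  define X where "X = suf S (nss S i)"
  have j: "i < nss S i" "ord_class.lexordp X (suf S i)" "nss S i = i + d"
    using nss_spec[OF nss] d(1) unfolding X_def by auto
  have u_len: "length u = d"
    using nss_spec(2)[OF nss] j unfolding u_def by (simp add: suf_def)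
  have suf_i: "suf S i = u @ X"
    using suf_eq_take_append_suf[of i S d] d(2) j(3) unfolding u_def X_def by simp
  have suf_p: "suf S (i - d) = u @ suf S i"
    using suf_eq_take_append_suf[of "i - d" S d] d(2) block unfolding u_def by simp
  have X_less: "ord_class.lexordp X (u @ X)"
    using j(2) suf_i by simp
  have u_suffixes: "\<not> ord_class.lexordp (w @ X) (u @ X)" if "w \<noteq> []" "strict_suffix w u" for w
    using not_lexordp_suffix_of_block_before_nss[OF nss _ that(1)] that(2) suf_i d
    unfolding u_def X_def by simp
  show ?thesis
  proof (rule nss_eqI)
    show "i - d < i" "i \<le> length S"
      using d(2) nss_spec(2)[OF nss] j by auto
    show "ord_class.lexordp (suf S i) (suf S (i - d))"
      using lexordp_append_leftI[OF X_less, of u] suf_i suf_p by simp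
    fix k assume k: "i - d < k" "k < i"
    define v where "v = drop (k - (i - d)) u"
    have suf_k: "suf S k = v @ u @ X"
      using drop_suf[of "i - d" "k - (i - d)" S] d(2) k suf_p suf_i u_len unfolding v_def by simp
    have "0 < k - (i - d)" "k - (i - d) < length u"
      using k u_len by auto
    then have "v \<noteq> []" "strict_suffix v u"
      unfolding v_def strict_suffix_def by (auto simp: suffix_drop dest: arg_cong[where f = length])
    with suf_k show "\<not> ord_class.lexordp (suf S k) (suf S (i - d))"
      using not_lexordp_strict_suffix_doubled[OF X_less u_suffixes] suf_p suf_i by simp
  qed
qed

theorem lemma11:
  fixes S :: "'a::linorder list" and i j :: nat
  assumes "1 \<le> i" and "i \<le> length S"
    and "j = nss S i" and "j \<noteq> length S + 1"
    and "llce S i j > j - i"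
  shows "llce S (i - (j - i)) i = llce S i j - (j - i) \<and> nss S (i - (j - i)) = i"
proof
  have j: "i < j" "j \<le> length S"
    using nss_spec assms(3,4) by auto
  then show "llce S (i - (j - i)) i = llce S i j - (j - i)"
    using llce_eq_period_add_llce[of i j S] assms(5) by simp
  have "j - i < i"
    using assms(5) common_suffix_len_llce[of i S j] assms(2) j
    by (auto simp: common_suffix_len_def)
  moreover have "take (Suc (j - i)) (suf S (i - (j - i))) = take (Suc (j - i)) (suf S i)"
    using take_suf_eq_if_le_llce[of i S j "Suc (j - i)"] assms(2,5) j \<open>j - i < i\<close>
    by (simp add: Suc_diff_Suc)
  then have "take (j - i) (take (Suc (j - i)) (suf S (i - (j - i)))) =
      take (j - i) (take (Suc (j - i)) (suf S i))"
    by (rule arg_cong)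
  then have "take (j - i) (suf S (i - (j - i))) = take (j - i) (suf S i)"
    by simp
  ultimately show "nss S (i - (j - i)) = i"
    using nss_of_repeated_block assms(3,4) by blast
qed

end
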